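(* Let $p,q\in\mathcal{S}$, let $k^*=\arg\max_k q_k$, let $m\ge1$ and $\delta\in[0,\log(1/p_{k^*}))$. Consider the problem of minimizing $H(\Phi\|q^m)$ over probability distributions $\Phi$ on $[K]^m$ subject to $D_{\mathrm{KL}}(\Phi\|p^m)\le m\delta$. Its unique solution is the product distribution $\phi_\delta^m$, i.e. $\Phi(y^m)=\prod_{i=1}^m\phi_\delta(y_i)$, where $\phi_\delta=T(q,p,\alpha(\delta))$.
   Context: Fix $K\ge2$ and $\zeta\in(0,1/K)$. $\mathcal{S}$ is the set of probability vectors $p=(p_1,\dots,p_K)$ on $[K]=\{1,\dots,K\}$ with $p_k>\zeta$ for all $k$ and $p_k\neq p_{k'}$ for all $k\ne k'$. For $p\in\mathcal{S}$, $p^m$ denotes the product (memoryless) distribution $p^m(y^m)=\prod_{i=1}^m p_{y_i}$ on $[K]^m$. Cross entropy $H(a\|b)=\sum a\log(1/b)$, KL divergence $D_{\mathrm{KL}}(a\|b)=\sum a\log(a/b)$, natural logarithms. Mismatched tilt: for $\alpha\in\mathbb{R}$, $T(q,p,\alpha)_k=\frac{p_kq_k^\alpha}{\sum_{j}p_jq_j^\alpha}$. For $\delta\in[0,\log(1/p_{k^*}))$, $\alpha(\delta)$ denotes the unique $\alpha\ge0$ with $D_{\mathrm{KL}}(T(q,p,\alpha)\|p)=\delta$, and $\phi_\delta=T(q,p,\alpha(\delta))$. *)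

theory Defs
  imports "HOL-Analysis.Analysis" "HOL-Library.FuncSet"
begin

text \<open>Alphabet [K] = {1..K}; distributions on [K] are functions nat => real (only values on {1..K} matter).
  Sequences y^m in [K]^m are functions in {0..<m} ->E {1..K}.\<close>

definition inS :: "nat \<Rightarrow> real \<Rightarrow> (nat \<Rightarrow> real) \<Rightarrow> bool" where
  "inS K \<zeta> p \<longleftrightarrow> (\<forall>k\<in>{1..K}. p k > \<zeta>) \<and> (\<Sum>k=1..K. p k) = 1 \<and>
     (\<forall>k\<in>{1..K}. \<forall>k'\<in>{1..K}. k \<noteq> k' \<longrightarrow> p k \<noteq> p k')"

definition seqs :: "nat \<Rightarrow> nat \<Rightarrow> (nat \<Rightarrow> nat) set" where
  "seqs K m = {0..<m} \<rightarrow>\<^sub>E {1..K}"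

definition prod_dist :: "nat \<Rightarrow> (nat \<Rightarrow> real) \<Rightarrow> (nat \<Rightarrow> nat) \<Rightarrow> real" where
  "prod_dist m p y = (\<Prod>i<m. p (y i))"

definition is_pmf_on :: "'a set \<Rightarrow> ('a \<Rightarrow> real) \<Rightarrow> bool" where
  "is_pmf_on A \<Phi> \<longleftrightarrow> (\<forall>x\<in>A. \<Phi> x \<ge> 0) \<and> (\<Sum>x\<in>A. \<Phi> x) = 1"

definition cross_ent :: "'a set \<Rightarrow> ('a \<Rightarrow> real) \<Rightarrow> ('a \<Rightarrow> real) \<Rightarrow> real" where
  "cross_ent A a b = (\<Sum>x\<in>A. a x * ln (1 / b x))"

definition kl_div :: "'a set \<Rightarrow> ('a \<Rightarrow> real) \<Rightarrow> ('a \<Rightarrow> real) \<Rightarrow> real" where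
  "kl_div A a b = (\<Sum>x\<in>A. a x * ln (a x / b x))"

definition tilt :: "nat \<Rightarrow> (nat \<Rightarrow> real) \<Rightarrow> (nat \<Rightarrow> real) \<Rightarrow> real \<Rightarrow> nat \<Rightarrow> real" where
  "tilt K q p \<alpha> k = p k * q k powr \<alpha> / (\<Sum>j=1..K. p j * q j powr \<alpha>)"

definition alpha_of :: "nat \<Rightarrow> (nat \<Rightarrow> real) \<Rightarrow> (nat \<Rightarrow> real) \<Rightarrow> real \<Rightarrow> real" where
  "alpha_of K q p \<delta> = (THE \<alpha>. \<alpha> \<ge> 0 \<and> kl_div {1..K} (tilt K q p \<alpha>) p = \<delta>)"

definition phi :: "nat \<Rightarrow> (nat \<Rightarrow> real) \<Rightarrow> (nat \<Rightarrow> real) \<Rightarrow> real \<Rightarrow> nat \<Rightarrow> real" where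
  "phi K q p \<delta> = tilt K q p (alpha_of K q p \<delta>)"

end

theory Submission
  imports Defs "HOL-Real_Asymp.Real_Asymp"
begin

text \<open>Let \<open>\<Psi> = \<phi>\<^sub>\<delta>\<^sup>m\<close>. Since \<open>\<phi>\<^sub>\<delta> \<propto> p \<cdot> q\<^sup>\<alpha>\<close>, also \<open>\<Psi> \<propto> p\<^sup>m \<cdot> (q\<^sup>m)\<^sup>\<alpha>\<close>, and for every
  distribution \<open>\<Phi>\<close> there is the exact identity
  \<open>D(\<Phi> \<parallel> p\<^sup>m) = D(\<Phi> \<parallel> \<Psi>) - \<alpha> H(\<Phi> \<parallel> q\<^sup>m) - C\<close>.
  Comparing it for \<open>\<Phi>\<close> and for \<open>\<Psi>\<close> gives \<open>D(\<Phi> \<parallel> \<Psi>) \<le> \<alpha> (H(\<Phi> \<parallel> q\<^sup>m) - H(\<Psi> \<parallel> q\<^sup>m))\<close>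
  whenever \<open>D(\<Phi> \<parallel> p\<^sup>m) \<le> D(\<Psi> \<parallel> p\<^sup>m) = m\<delta>\<close>; as \<open>\<alpha> \<ge> 0\<close>, Gibbs' inequality yields both
  optimality and uniqueness. The tilt parameter \<open>\<alpha>(\<delta>)\<close> exists and is unique because
  \<open>\<alpha> \<mapsto> D(T(q,p,\<alpha>) \<parallel> p)\<close> is continuous, vanishes at \<open>0\<close>, is strictly increasing (the same
  identity applied to two tilts), and tends to \<open>ln (1 / p\<^sub>k\<^sub>*)\<close> as the tilt concentrates on the
  maximiser \<open>k\<^sup>*\<close> of \<open>q\<close>.\<close>

section \<open>Gibbs' inequality and tilted distributions\<close>

lemma mult_ln_div_ge_diff:
  fixes a b :: real
  assumes "0 \<le> a" "0 < b"
  shows "a - b \<le> a * ln (a / b)"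
proof (cases "a = 0")
  case False
  with assms have "a * ln (b / a) \<le> a * (b / a - 1)"
    by (intro mult_left_mono ln_le_minus_one) auto
  with False assms show ?thesis by (simp add: ln_div right_diff_distrib)
qed (use assms in simp)

lemma mult_ln_div_eq_diff_imp_eq:
  fixes a b :: real
  assumes "0 \<le> a" "0 < b" "a * ln (a / b) = a - b"
  shows "a = b"
proof (cases "a = 0")
  case True
  with assms show ?thesis by simp
next
  case False
  with assms have "ln (b / a) = b / a - 1"
    by (simp add: ln_div field_simps)
  with False assms have "b / a = 1" by (intro ln_eq_minus_one) auto
  then show ?thesis by simp
qed

lemma kl_div_eq_sum_nonneg_terms:
  assumes "sum a A = 1" "sum b A = 1"
  shows "kl_div A a b = (\<Sum>x\<in>A. a x * ln (a x / b x) - (a x - b x))"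
  using assms unfolding kl_div_def sum_subtractf by simp

lemma kl_div_nonneg:
  assumes "is_pmf_on A a" "\<forall>x\<in>A. 0 < b x" "sum b A = 1"
  shows "0 \<le> kl_div A a b"
  using assms mult_ln_div_ge_diff
  by (auto simp: is_pmf_on_def kl_div_eq_sum_nonneg_terms intro!: sum_nonneg)

lemma kl_div_le_0_imp_eq:
  assumes "finite A" "is_pmf_on A a" "\<forall>x\<in>A. 0 < b x" "sum b A = 1" "kl_div A a b \<le> 0"
  shows "\<forall>x\<in>A. a x = b x"
proof -
  have terms_nonneg: "\<forall>x\<in>A. 0 \<le> a x * ln (a x / b x) - (a x - b x)"
    using assms(2,3) mult_ln_div_ge_diff by (auto simp: is_pmf_on_def)
  with assms have "\<forall>x\<in>A. a x * ln (a x / b x) - (a x - b x) = 0"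
    by (subst sum_nonneg_eq_0_iff[symmetric])
      (auto simp: is_pmf_on_def kl_div_eq_sum_nonneg_terms intro!: antisym sum_nonneg)
  with assms(2,3) show ?thesis
    by (auto simp: is_pmf_on_def intro: mult_ln_div_eq_diff_imp_eq)
qed

lemma kl_div_self [simp]: "kl_div A a a = 0"
  unfolding kl_div_def by (intro sum.neutral) simp

text \<open>The log-ratio hypothesis says \<open>\<Psi> \<propto> P \<cdot> Q\<^sup>\<alpha>\<close> on \<open>A\<close>, with normaliser \<open>e\<^sup>C\<close>.\<close>

lemma kl_div_tilted_decomp:
  assumes "is_pmf_on A \<Phi>" "\<forall>y\<in>A. 0 < \<Psi> y" "\<forall>y\<in>A. 0 < P y" "\<forall>y\<in>A. 0 < Q y"
    and log_ratio: "\<forall>y\<in>A. ln (\<Psi> y / P y) = \<alpha> * ln (Q y) - C"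
  shows "kl_div A \<Phi> P = kl_div A \<Phi> \<Psi> - \<alpha> * cross_ent A \<Phi> Q - C"
proof -
  have "\<Phi> y * ln (\<Phi> y / P y) = \<Phi> y * ln (\<Phi> y / \<Psi> y) - \<alpha> * (\<Phi> y * ln (1 / Q y)) - C * \<Phi> y"
    if y: "y \<in> A" for y
  proof (cases "\<Phi> y = 0")
    case False
    with assms(1) y have "0 < \<Phi> y" by (force simp: is_pmf_on_def)
    moreover have "0 < \<Psi> y" "0 < P y" "0 < Q y" using assms(2-4) y by auto
    ultimately have ln_P: "ln (\<Phi> y / P y) = ln (\<Phi> y / \<Psi> y) + ln (\<Psi> y / P y)"
      and ln_Q: "ln (1 / Q y) = - ln (Q y)"
      by (simp_all add: ln_div)
    show ?thesis unfolding ln_P ln_Q log_ratio[rule_format, OF y] by (simp add: algebra_simps)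
  qed simp
  then have "kl_div A \<Phi> P = kl_div A \<Phi> \<Psi> - \<alpha> * cross_ent A \<Phi> Q - C * sum \<Phi> A"
    unfolding kl_div_def cross_ent_def
    by (simp add: sum_subtractf sum_distrib_left sum_distrib_right)
  with assms(1) show ?thesis by (simp add: is_pmf_on_def)
qed

lemma kl_div_le_cross_ent_gap:
  assumes "is_pmf_on A \<Phi>" "kl_div A \<Phi> P \<le> kl_div A \<Psi> P"
    and "is_pmf_on A \<Psi>" "\<forall>y\<in>A. 0 < \<Psi> y" "\<forall>y\<in>A. 0 < P y" "\<forall>y\<in>A. 0 < Q y"
    and "\<forall>y\<in>A. ln (\<Psi> y / P y) = \<alpha> * ln (Q y) - C"
  shows "kl_div A \<Phi> \<Psi> \<le> \<alpha> * (cross_ent A \<Phi> Q - cross_ent A \<Psi> Q)"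
  using assms kl_div_tilted_decomp[of A \<Phi> \<Psi> P Q \<alpha> C] kl_div_tilted_decomp[of A \<Psi> \<Psi> P Q \<alpha> C]
  by (simp add: algebra_simps)

lemma tilted_minimizes_cross_ent:
  assumes "finite A" "is_pmf_on A \<Phi>" "kl_div A \<Phi> P \<le> kl_div A \<Psi> P"
    and "is_pmf_on A \<Psi>" "\<forall>y\<in>A. 0 < \<Psi> y" "\<forall>y\<in>A. 0 < P y" "\<forall>y\<in>A. 0 < Q y"
    and "0 \<le> \<alpha>" "\<forall>y\<in>A. ln (\<Psi> y / P y) = \<alpha> * ln (Q y) - C"
  shows "cross_ent A \<Psi> Q \<le> cross_ent A \<Phi> Q"
    and "cross_ent A \<Phi> Q \<le> cross_ent A \<Psi> Q \<Longrightarrow> \<forall>y\<in>A. \<Phi> y = \<Psi> y"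
proof -
  have gap: "kl_div A \<Phi> \<Psi> \<le> \<alpha> * (cross_ent A \<Phi> Q - cross_ent A \<Psi> Q)"
    using assms(2-7,9) by (rule kl_div_le_cross_ent_gap)
  have Psi_sum: "sum \<Psi> A = 1" using assms(4) by (simp add: is_pmf_on_def)
  have kl_nonneg: "0 \<le> kl_div A \<Phi> \<Psi>"
    using assms(2,5) Psi_sum by (rule kl_div_nonneg)
  show eq: "\<forall>y\<in>A. \<Phi> y = \<Psi> y" if "cross_ent A \<Phi> Q \<le> cross_ent A \<Psi> Q"
  proof (rule kl_div_le_0_imp_eq[OF assms(1,2,5) Psi_sum])
    from that assms(8) have "\<alpha> * (cross_ent A \<Phi> Q - cross_ent A \<Psi> Q) \<le> 0"
      by (simp add: mult_nonneg_nonpos)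
    with gap show "kl_div A \<Phi> \<Psi> \<le> 0" by linarith
  qed
  show "cross_ent A \<Psi> Q \<le> cross_ent A \<Phi> Q"
  proof (rule ccontr)
    assume "\<not> ?thesis"
    then have "\<forall>y\<in>A. \<Phi> y = \<Psi> y" by (intro eq) simp
    then have "cross_ent A \<Phi> Q = cross_ent A \<Psi> Q" by (simp add: cross_ent_def)
    with \<open>\<not> ?thesis\<close> show False by simp
  qed
qed

section \<open>Memoryless distributions on \<open>[K]\<^sup>m\<close>\<close>

lemma finite_seqs: "finite (seqs K m)"
  unfolding seqs_def by (intro finite_PiE) auto

lemma seqs_memD: "y \<in> seqs K m \<Longrightarrow> i < m \<Longrightarrow> y i \<in> {1..K}"
  unfolding seqs_def by (auto simp: PiE_iff)

lemma sum_seqs_prod: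
  fixes h :: "nat \<Rightarrow> nat \<Rightarrow> real"
  shows "(\<Sum>y\<in>seqs K m. \<Prod>i<m. h i (y i)) = (\<Prod>i<m. \<Sum>k=1..K. h i k)"
  unfolding seqs_def using prod_sum_PiE[of "{0..<m}" "\<lambda>_. {1..K}" h]
  by (simp add: atLeast0LessThan)

lemma is_pmf_on_prod_dist:
  assumes "is_pmf_on {1..K} \<phi>"
  shows "is_pmf_on (seqs K m) (prod_dist m \<phi>)"
  using assms sum_seqs_prod[where h = "\<lambda>_. \<phi>"] seqs_memD[of _ K m]
  by (auto simp: is_pmf_on_def prod_dist_def intro!: prod_nonneg)

lemma prod_dist_pos:
  assumes "\<And>k. k \<in> {1..K} \<Longrightarrow> 0 < f k" "y \<in> seqs K m"
  shows "0 < prod_dist m f y"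
  unfolding prod_dist_def using assms seqs_memD by (intro prod_pos) blast

lemma ln_prod_dist:
  assumes "\<And>k. k \<in> {1..K} \<Longrightarrow> 0 < f k" "y \<in> seqs K m"
  shows "ln (prod_dist m f y) = (\<Sum>i<m. ln (f (y i)))"
  unfolding prod_dist_def using assms seqs_memD by (intro ln_prod) force+

lemma ln_prod_dist_div:
  assumes "\<And>k. k \<in> {1..K} \<Longrightarrow> 0 < f k" "\<And>k. k \<in> {1..K} \<Longrightarrow> 0 < g k" "y \<in> seqs K m"
  shows "ln (prod_dist m f y / prod_dist m g y) = (\<Sum>i<m. ln (f (y i) / g (y i)))"
proof -
  have "prod_dist m f y / prod_dist m g y = prod_dist m (\<lambda>k. f k / g k) y"
    unfolding prod_dist_def by (simp add: prod_dividef)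
  moreover have "ln (prod_dist m (\<lambda>k. f k / g k) y) = (\<Sum>i<m. ln (f (y i) / g (y i)))"
    using assms by (intro ln_prod_dist) simp_all
  ultimately show ?thesis by simp
qed

lemma sum_prod_dist_additive:
  assumes "(\<Sum>k=1..K. \<phi> k) = 1"
  shows "(\<Sum>y\<in>seqs K m. prod_dist m \<phi> y * (\<Sum>i<m. f (y i))) = real m * (\<Sum>k=1..K. \<phi> k * f k)"
proof -
  define h :: "nat \<Rightarrow> nat \<Rightarrow> nat \<Rightarrow> real"
    where "h i j = (if j = i then (\<lambda>k. \<phi> k * f k) else \<phi>)" for i j
  have "prod_dist m \<phi> y * f (y i) = (\<Prod>j<m. h i j (y j))" if "i < m" for y i
  proof -
    have "(\<Prod>j<m. h i j (y j)) = (\<Prod>j<m. \<phi> (y j) * (if j = i then f (y j) else 1))"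
      unfolding h_def by (intro prod.cong) auto
    with that show ?thesis by (simp add: prod.distrib prod_dist_def)
  qed
  then have "(\<Sum>y\<in>seqs K m. prod_dist m \<phi> y * (\<Sum>i<m. f (y i)))
      = (\<Sum>i<m. \<Sum>y\<in>seqs K m. \<Prod>j<m. h i j (y j))"
    by (simp add: sum_distrib_left sum.swap[of _ "seqs K m"])
  also have "\<dots> = (\<Sum>i<m. \<Prod>j<m. \<Sum>k=1..K. h i j k)"
    by (simp add: sum_seqs_prod)
  also have "\<dots> = (\<Sum>i<m. \<Prod>j<m. if j = i then (\<Sum>k=1..K. \<phi> k * f k) else 1)"
    using assms by (intro sum.cong prod.cong refl) (simp add: h_def)
  also have "\<dots> = (\<Sum>i<m. \<Sum>k=1..K. \<phi> k * f k)"
    by simp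
  finally show ?thesis by simp
qed

lemma ln_prod_dist_div_tilted:
  assumes "\<And>k. k \<in> {1..K} \<Longrightarrow> 0 < \<phi> k" "\<And>k. k \<in> {1..K} \<Longrightarrow> 0 < p k"
    and "\<And>k. k \<in> {1..K} \<Longrightarrow> 0 < q k"
    and "\<And>k. k \<in> {1..K} \<Longrightarrow> ln (\<phi> k / p k) = \<alpha> * ln (q k) - C" and y: "y \<in> seqs K m"
  shows "ln (prod_dist m \<phi> y / prod_dist m p y) = \<alpha> * ln (prod_dist m q y) - real m * C"
proof -
  have "ln (prod_dist m \<phi> y / prod_dist m p y) = (\<Sum>i<m. ln (\<phi> (y i) / p (y i)))"
    by (rule ln_prod_dist_div[OF assms(1,2) y])
  also have "\<dots> = (\<Sum>i<m. \<alpha> * ln (q (y i)) - C)"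
    using assms(4) seqs_memD[OF y] by (intro sum.cong) auto
  also have "\<dots> = \<alpha> * ln (prod_dist m q y) - real m * C"
    using ln_prod_dist[OF assms(3) y] by (simp add: sum_subtractf sum_distrib_left)
  finally show ?thesis .
qed

lemma kl_div_prod_dist:
  assumes "\<And>k. k \<in> {1..K} \<Longrightarrow> 0 < \<phi> k" "\<And>k. k \<in> {1..K} \<Longrightarrow> 0 < p k" "(\<Sum>k=1..K. \<phi> k) = 1"
  shows "kl_div (seqs K m) (prod_dist m \<phi>) (prod_dist m p) = real m * kl_div {1..K} \<phi> p"
proof -
  have "kl_div (seqs K m) (prod_dist m \<phi>) (prod_dist m p)
      = (\<Sum>y\<in>seqs K m. prod_dist m \<phi> y * (\<Sum>i<m. ln (\<phi> (y i) / p (y i))))"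
    unfolding kl_div_def using ln_prod_dist_div[OF assms(1,2)] by (intro sum.cong) simp_all
  also have "\<dots> = real m * kl_div {1..K} \<phi> p"
    unfolding kl_div_def by (rule sum_prod_dist_additive[OF assms(3)])
  finally show ?thesis .
qed

section \<open>Exponential tilting\<close>

lemma tendsto_powr_at_top_0:
  fixes r :: real
  assumes "0 < r" "r < 1"
  shows "((\<lambda>a. r powr a) \<longlongrightarrow> 0) at_top"
proof -
  from assms have "ln r < 0" by simp
  then have "filterlim (\<lambda>a. ln r * a) at_bot at_top"
    by (rule filterlim_tendsto_neg_mult_at_bot[OF tendsto_const _ filterlim_ident])
  then have "((\<lambda>a. exp (ln r * a)) \<longlongrightarrow> 0) at_top"
    by (rule filterlim_compose[OF exp_at_bot])
  with assms show ?thesis by (simp add: powr_def mult.commute)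
qed

lemma kl_div_tendsto_point_mass:
  fixes \<phi> :: "'b \<Rightarrow> 'a \<Rightarrow> real"
  assumes "finite A" "k\<^sub>0 \<in> A" "\<forall>k\<in>A. 0 < p k" "\<forall>t. \<forall>k\<in>A. 0 < \<phi> t k"
    and lim: "\<forall>k\<in>A. ((\<lambda>t. \<phi> t k) \<longlongrightarrow> (if k = k\<^sub>0 then 1 else 0)) F"
  shows "((\<lambda>t. kl_div A (\<phi> t) p) \<longlongrightarrow> ln (1 / p k\<^sub>0)) F"
proof -
  have term_lim: "((\<lambda>t. \<phi> t k * ln (\<phi> t k / p k)) \<longlongrightarrow> (if k = k\<^sub>0 then ln (1 / p k) else 0)) F"
    if k: "k \<in> A" for k
  proof (cases "k = k\<^sub>0")
    case True
    with lim[rule_format, OF k] have "((\<lambda>t. \<phi> t k) \<longlongrightarrow> 1) F" by simp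
    with assms(3) k have "((\<lambda>t. \<phi> t k * ln (\<phi> t k / p k)) \<longlongrightarrow> 1 * ln (1 / p k)) F"
      by (intro tendsto_intros) auto
    with True show ?thesis by simp
  next
    case False
    with lim[rule_format, OF k] have to_0: "((\<lambda>t. \<phi> t k) \<longlongrightarrow> 0) F" by simp
    with assms(4) k have "filterlim (\<lambda>t. \<phi> t k) (at_right 0) F"
      by (intro tendsto_imp_filterlim_at_right) auto
    moreover have "((\<lambda>x::real. x * ln x) \<longlongrightarrow> 0) (at_right 0)" by real_asymp
    ultimately have "((\<lambda>t. \<phi> t k * ln (\<phi> t k)) \<longlongrightarrow> 0) F"
      by (rule filterlim_compose[rotated])
    then have "((\<lambda>t. \<phi> t k * ln (\<phi> t k) - \<phi> t k * ln (p k)) \<longlongrightarrow> 0 - 0 * ln (p k)) F"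
      by (intro tendsto_intros to_0)
    moreover have "\<phi> t k * ln (\<phi> t k / p k) = \<phi> t k * ln (\<phi> t k) - \<phi> t k * ln (p k)" for t
    proof -
      have "0 < p k" "0 < \<phi> t k" using assms(3,4) k by auto
      then show ?thesis by (simp add: ln_div right_diff_distrib)
    qed
    ultimately show ?thesis using False by simp
  qed
  have "((\<lambda>t. kl_div A (\<phi> t) p) \<longlongrightarrow> (\<Sum>k\<in>A. if k = k\<^sub>0 then ln (1 / p k) else 0)) F"
    unfolding kl_div_def by (intro tendsto_sum term_lim)
  with assms(1,2) show ?thesis by simp
qed

definition tilt_norm :: "nat \<Rightarrow> (nat \<Rightarrow> real) \<Rightarrow> (nat \<Rightarrow> real) \<Rightarrow> real \<Rightarrow> real" where
  "tilt_norm K q p \<alpha> = (\<Sum>j=1..K. p j * q j powr \<alpha>)"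

lemma tilt_eq: "tilt K q p \<alpha> k = p k * q k powr \<alpha> / tilt_norm K q p \<alpha>"
  unfolding tilt_def tilt_norm_def ..

locale tilting =
  fixes K :: nat and p q :: "nat \<Rightarrow> real"
  assumes K_pos: "1 \<le> K"
    and p_pos: "k \<in> {1..K} \<Longrightarrow> 0 < p k"
    and q_pos: "k \<in> {1..K} \<Longrightarrow> 0 < q k"
begin

lemma tilt_weight_pos:
  assumes "k \<in> {1..K}"
  shows "0 < p k * q k powr \<alpha>"
proof -
  have "0 < p k" "0 < q k" using assms p_pos q_pos by auto
  then show ?thesis by simp
qed

lemma tilt_norm_pos: "0 < tilt_norm K q p \<alpha>"
  unfolding tilt_norm_def using K_pos tilt_weight_pos by (intro sum_pos) auto

lemma tilt_pos: "k \<in> {1..K} \<Longrightarrow> 0 < tilt K q p \<alpha> k"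
  unfolding tilt_eq using tilt_weight_pos tilt_norm_pos by simp

lemma sum_tilt: "(\<Sum>k=1..K. tilt K q p \<alpha> k) = 1"
  unfolding tilt_eq sum_divide_distrib[symmetric] using tilt_norm_pos[of \<alpha>]
  by (simp add: tilt_norm_def)

lemma is_pmf_on_tilt: "is_pmf_on {1..K} (tilt K q p \<alpha>)"
  using tilt_pos sum_tilt by (auto simp: is_pmf_on_def less_imp_le)

lemma ln_tilt_div:
  assumes "k \<in> {1..K}"
  shows "ln (tilt K q p \<alpha> k / p k) = \<alpha> * ln (q k) - ln (tilt_norm K q p \<alpha>)"
proof -
  have "0 < p k" "0 < q k" "0 < tilt_norm K q p \<alpha>" using assms p_pos q_pos tilt_norm_pos by auto
  then have "tilt K q p \<alpha> k / p k = q k powr \<alpha> / tilt_norm K q p \<alpha>" by (simp add: tilt_eq)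
  with \<open>0 < q k\<close> \<open>0 < tilt_norm K q p \<alpha>\<close> show ?thesis by (simp add: ln_div)
qed

lemma continuous_on_tilt:
  assumes "k \<in> {1..K}"
  shows "continuous_on UNIV (\<lambda>\<alpha>. tilt K q p \<alpha> k)"
proof -
  have "continuous_on UNIV (tilt_norm K q p)"
    unfolding tilt_norm_def using q_pos by (intro continuous_intros) force
  moreover have "tilt_norm K q p \<alpha> \<noteq> 0" for \<alpha> using tilt_norm_pos[of \<alpha>] by simp
  ultimately show ?thesis
    unfolding tilt_eq using assms q_pos by (intro continuous_intros) force+
qed

lemma continuous_on_kl_div_tilt: "continuous_on UNIV (\<lambda>\<alpha>. kl_div {1..K} (tilt K q p \<alpha>) p)"
  unfolding kl_div_def
proof (intro continuous_intros continuous_on_tilt ballI)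
  fix k and \<alpha> :: real assume k: "k \<in> {1..K}"
  show "p k \<noteq> 0" using p_pos[OF k] by simp
  show "tilt K q p \<alpha> k / p k \<noteq> 0" using p_pos[OF k] tilt_pos[OF k, of \<alpha>] by simp
qed

lemma kl_div_tilt_0:
  assumes "(\<Sum>k=1..K. p k) = 1"
  shows "kl_div {1..K} (tilt K q p 0) p = 0"
proof -
  have "tilt_norm K q p 0 = (\<Sum>k=1..K. p k)"
    unfolding tilt_norm_def using q_pos by (intro sum.cong) force+
  then have "tilt K q p 0 k = p k" if "k \<in> {1..K}" for k
    using q_pos[OF that] assms by (simp add: tilt_eq)
  then have "kl_div {1..K} (tilt K q p 0) p = kl_div {1..K} p p"
    unfolding kl_div_def by (intro sum.cong) simp_all
  then show ?thesis by simp
qed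

lemma kl_div_tilt_decomp:
  "kl_div {1..K} (tilt K q p \<beta>) p
     = kl_div {1..K} (tilt K q p \<beta>) (tilt K q p \<alpha>)
       - \<alpha> * cross_ent {1..K} (tilt K q p \<beta>) q - ln (tilt_norm K q p \<alpha>)"
  using is_pmf_on_tilt tilt_pos p_pos q_pos ln_tilt_div by (intro kl_div_tilted_decomp) auto

lemma tilt_inj:
  assumes "k\<^sub>1 \<in> {1..K}" "k\<^sub>2 \<in> {1..K}" "q k\<^sub>1 \<noteq> q k\<^sub>2"
    and "\<forall>k\<in>{1..K}. tilt K q p \<alpha> k = tilt K q p \<beta> k"
  shows "\<alpha> = \<beta>"
proof -
  have "\<alpha> * ln (q k) - ln (tilt_norm K q p \<alpha>) = \<beta> * ln (q k) - ln (tilt_norm K q p \<beta>)"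
    if "k \<in> {1..K}" for k
    using ln_tilt_div[OF that, of \<alpha>] ln_tilt_div[OF that, of \<beta>] assms(4) that by simp
  from this[OF assms(1)] this[OF assms(2)]
  have "(\<alpha> - \<beta>) * (ln (q k\<^sub>1) - ln (q k\<^sub>2)) = 0" by (simp add: algebra_simps)
  moreover have "ln (q k\<^sub>1) \<noteq> ln (q k\<^sub>2)"
    using assms(3) q_pos[OF assms(1)] q_pos[OF assms(2)] by simp
  ultimately show ?thesis by simp
qed

lemma kl_div_tilt_strict_mono:
  assumes "k\<^sub>1 \<in> {1..K}" "k\<^sub>2 \<in> {1..K}" "q k\<^sub>1 \<noteq> q k\<^sub>2" "0 \<le> \<alpha>" "\<alpha> < \<beta>"
  shows "kl_div {1..K} (tilt K q p \<alpha>) p < kl_div {1..K} (tilt K q p \<beta>) p"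
proof -
  define D where "D \<gamma> = kl_div {1..K} (tilt K q p \<gamma>) p" for \<gamma>
  define H where "H \<gamma> = cross_ent {1..K} (tilt K q p \<gamma>) q" for \<gamma>
  define kl where "kl \<gamma> \<gamma>' = kl_div {1..K} (tilt K q p \<gamma>) (tilt K q p \<gamma>')" for \<gamma> \<gamma>'
  have kl_nonneg: "0 \<le> kl \<gamma> \<gamma>'" for \<gamma> \<gamma>'
    unfolding kl_def using is_pmf_on_tilt tilt_pos sum_tilt by (intro kl_div_nonneg) auto
  have "kl \<beta> \<alpha> \<noteq> 0"
  proof
    assume "kl \<beta> \<alpha> = 0"
    then have "\<forall>k\<in>{1..K}. tilt K q p \<beta> k = tilt K q p \<alpha> k"
      unfolding kl_def using is_pmf_on_tilt tilt_pos sum_tilt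
      by (intro kl_div_le_0_imp_eq) auto
    with tilt_inj[OF assms(1-3)] assms(5) show False by auto
  qed
  with kl_nonneg have kl_pos: "0 < kl \<beta> \<alpha>" by (simp add: order_less_le)
  have "D \<beta> - D \<alpha> = kl \<beta> \<alpha> + \<alpha> * (H \<alpha> - H \<beta>)"
    and "D \<alpha> - D \<beta> = kl \<alpha> \<beta> + \<beta> * (H \<beta> - H \<alpha>)"
    unfolding D_def H_def kl_def
    using kl_div_tilt_decomp[of \<beta> \<alpha>] kl_div_tilt_decomp[of \<alpha> \<alpha>]
      kl_div_tilt_decomp[of \<alpha> \<beta>] kl_div_tilt_decomp[of \<beta> \<beta>]
    by (simp_all add: algebra_simps)
  then have "(\<beta> - \<alpha>) * (H \<beta> - H \<alpha>) = - (kl \<beta> \<alpha> + kl \<alpha> \<beta>)"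
    by (simp add: algebra_simps)
  with kl_nonneg[of \<beta> \<alpha>] kl_nonneg[of \<alpha> \<beta>] assms(5) have "H \<beta> \<le> H \<alpha>"
    by (smt (verit) mult_pos_pos)
  with assms(4) have "0 \<le> \<alpha> * (H \<alpha> - H \<beta>)" by simp
  with \<open>D \<beta> - D \<alpha> = _\<close> kl_pos show ?thesis unfolding D_def by linarith
qed

text \<open>Normalising \<open>q\<close> by its maximum \<open>q k\<^sup>*\<close> leaves the tilt unchanged; the
  normalised weights \<open>(q k / q k\<^sup>*)\<^sup>\<alpha>\<close> then tend to the indicator of \<open>k\<^sup>*\<close>.\<close>

lemma tilt_tendsto_point_mass:
  assumes kstar: "kstar \<in> {1..K}" and q_max: "\<forall>k\<in>{1..K}. k \<noteq> kstar \<longrightarrow> q k < q kstar"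
    and k: "k \<in> {1..K}"
  shows "((\<lambda>\<alpha>. tilt K q p \<alpha> k) \<longlongrightarrow> (if k = kstar then 1 else 0)) at_top"
proof -
  define r where "r j = q j / q kstar" for j
  have r_pos: "0 < r j" if "j \<in> {1..K}" for j
    unfolding r_def using q_pos[OF that] q_pos[OF kstar] by simp
  have r_lim: "((\<lambda>\<alpha>. r j powr \<alpha>) \<longlongrightarrow> (if j = kstar then 1 else 0)) at_top"
    if j: "j \<in> {1..K}" for j
  proof (cases "j = kstar")
    case True
    with q_pos[OF kstar] show ?thesis by (simp add: r_def)
  next
    case False
    with q_max j q_pos[OF kstar] have "r j < 1" by (simp add: r_def)
    with False r_pos[OF j] show ?thesis by (simp add: tendsto_powr_at_top_0)
  qed
  have q_powr: "q j powr \<alpha> = q kstar powr \<alpha> * r j powr \<alpha>" if "j \<in> {1..K}" for j \<alpha>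
    using q_pos[OF that] q_pos[OF kstar] by (simp add: r_def powr_divide)
  then have "tilt_norm K q p \<alpha> = q kstar powr \<alpha> * tilt_norm K r p \<alpha>" for \<alpha>
    unfolding tilt_norm_def sum_distrib_left by (intro sum.cong) simp_all
  with q_powr[OF k] q_pos[OF kstar]
  have tilt_r: "tilt K q p \<alpha> k = p k * r k powr \<alpha> / tilt_norm K r p \<alpha>" for \<alpha>
    by (simp add: tilt_eq)
  have "(tilt_norm K r p \<longlongrightarrow> (\<Sum>j=1..K. p j * (if j = kstar then 1 else 0))) at_top"
    unfolding tilt_norm_def[abs_def] by (intro tendsto_intros r_lim) simp
  with kstar have "(tilt_norm K r p \<longlongrightarrow> p kstar) at_top"
    by (simp add: if_distrib cong: if_cong)
  with r_lim[OF k] p_pos[OF kstar]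
  have "((\<lambda>\<alpha>. p k * r k powr \<alpha> / tilt_norm K r p \<alpha>)
      \<longlongrightarrow> p k * (if k = kstar then 1 else 0) / p kstar) at_top"
    by (intro tendsto_intros) auto
  with p_pos[OF kstar] show ?thesis unfolding tilt_r by (simp split: if_splits)
qed

lemma kl_div_tilt_tendsto:
  assumes "kstar \<in> {1..K}" "\<forall>k\<in>{1..K}. k \<noteq> kstar \<longrightarrow> q k < q kstar"
  shows "((\<lambda>\<alpha>. kl_div {1..K} (tilt K q p \<alpha>) p) \<longlongrightarrow> ln (1 / p kstar)) at_top"
  using assms tilt_tendsto_point_mass[OF assms] p_pos tilt_pos
  by (intro kl_div_tendsto_point_mass) auto

text \<open>\<open>\<alpha> \<mapsto> D(T(q,p,\<alpha>) \<parallel> p)\<close> rises continuously and strictly from \<open>0\<close> towards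
  \<open>ln (1 / p k\<^sup>*)\<close>, so every \<open>\<delta>\<close> in between has exactly one preimage.\<close>

lemma alpha_of_spec:
  assumes "2 \<le> K" "(\<Sum>k=1..K. p k) = 1"
    and kstar: "kstar \<in> {1..K}" and q_max: "\<forall>k\<in>{1..K}. k \<noteq> kstar \<longrightarrow> q k < q kstar"
    and "0 \<le> \<delta>" "\<delta> < ln (1 / p kstar)"
  shows "0 \<le> alpha_of K q p \<delta> \<and> kl_div {1..K} (tilt K q p (alpha_of K q p \<delta>)) p = \<delta>"
proof -
  define D where "D \<alpha> = kl_div {1..K} (tilt K q p \<alpha>) p" for \<alpha>
  define k' :: nat where "k' = (if kstar = 1 then 2 else 1)"
  have k': "k' \<in> {1..K}" "q k' \<noteq> q kstar"
    using assms(1) kstar q_max[rule_format, of k'] by (auto simp: k'_def)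
  have "eventually (\<lambda>\<alpha>. \<delta> < D \<alpha>) at_top"
    unfolding D_def using kl_div_tilt_tendsto[OF kstar q_max] assms(6) by (rule order_tendstoD(1))
  then obtain a\<^sub>1 where a\<^sub>1: "0 \<le> a\<^sub>1" "\<delta> < D a\<^sub>1"
    by (metis eventually_at_top_linorder max.cobounded1 max.cobounded2)
  moreover have "continuous_on {0..a\<^sub>1} D"
    unfolding D_def by (rule continuous_on_subset[OF continuous_on_kl_div_tilt]) simp
  moreover have "D 0 = 0" unfolding D_def using assms(2) by (rule kl_div_tilt_0)
  ultimately obtain \<alpha> where \<alpha>: "0 \<le> \<alpha>" "D \<alpha> = \<delta>"
    using IVT'[of D 0 \<delta> a\<^sub>1] assms(5) by auto
  have "\<beta> = \<alpha>" if "0 \<le> \<beta>" "D \<beta> = \<delta>" for \<beta>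
    using kl_div_tilt_strict_mono[OF k'(1) kstar k'(2), of \<alpha> \<beta>]
      kl_div_tilt_strict_mono[OF k'(1) kstar k'(2), of \<beta> \<alpha>] \<alpha> that
    unfolding D_def by (cases \<alpha> \<beta> rule: linorder_cases) auto
  with \<alpha> have "\<exists>!\<alpha>. 0 \<le> \<alpha> \<and> D \<alpha> = \<delta>" by blast
  then show ?thesis unfolding alpha_of_def D_def by (rule theI')
qed


lemma kl_div_prod_dist_tilt:
  "kl_div (seqs K m) (prod_dist m (tilt K q p \<alpha>)) (prod_dist m p)
     = real m * kl_div {1..K} (tilt K q p \<alpha>) p"
  by (rule kl_div_prod_dist[OF tilt_pos p_pos sum_tilt])

lemma prod_dist_tilt_minimizes_cross_ent:
  assumes "0 \<le> \<alpha>" "is_pmf_on (seqs K m) \<Phi>"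
    and "kl_div (seqs K m) \<Phi> (prod_dist m p)
      \<le> kl_div (seqs K m) (prod_dist m (tilt K q p \<alpha>)) (prod_dist m p)"
  shows "cross_ent (seqs K m) (prod_dist m (tilt K q p \<alpha>)) (prod_dist m q)
      \<le> cross_ent (seqs K m) \<Phi> (prod_dist m q)"
    and "cross_ent (seqs K m) \<Phi> (prod_dist m q)
      \<le> cross_ent (seqs K m) (prod_dist m (tilt K q p \<alpha>)) (prod_dist m q)
      \<Longrightarrow> \<forall>y\<in>seqs K m. \<Phi> y = prod_dist m (tilt K q p \<alpha>) y"
proof -
  have "\<forall>y\<in>seqs K m. 0 < prod_dist m (tilt K q p \<alpha>) y"
    and "\<forall>y\<in>seqs K m. 0 < prod_dist m p y" and "\<forall>y\<in>seqs K m. 0 < prod_dist m q y"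
    using prod_dist_pos[where f = "tilt K q p \<alpha>", OF tilt_pos]
      prod_dist_pos[where f = p, OF p_pos] prod_dist_pos[where f = q, OF q_pos]
    by blast+
  moreover have "\<forall>y\<in>seqs K m. ln (prod_dist m (tilt K q p \<alpha>) y / prod_dist m p y)
      = \<alpha> * ln (prod_dist m q y) - real m * ln (tilt_norm K q p \<alpha>)"
    using ln_prod_dist_div_tilted[where \<phi> = "tilt K q p \<alpha>", OF tilt_pos p_pos q_pos ln_tilt_div]
    by blast
  ultimately show "cross_ent (seqs K m) (prod_dist m (tilt K q p \<alpha>)) (prod_dist m q)
      \<le> cross_ent (seqs K m) \<Phi> (prod_dist m q)"
    and "cross_ent (seqs K m) \<Phi> (prod_dist m q)
      \<le> cross_ent (seqs K m) (prod_dist m (tilt K q p \<alpha>)) (prod_dist m q)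
      \<Longrightarrow> \<forall>y\<in>seqs K m. \<Phi> y = prod_dist m (tilt K q p \<alpha>) y"
    using tilted_minimizes_cross_ent[OF finite_seqs assms(2,3)
        is_pmf_on_prod_dist[OF is_pmf_on_tilt] _ _ _ assms(1)]
    by blast+
qed

end

lemma tilting_if_inS:
  assumes "1 \<le> K" "0 \<le> \<zeta>" "inS K \<zeta> p" "inS K \<zeta> q"
  shows "tilting K p q"
proof
  fix k assume "k \<in> {1..K}"
  with assms(2-4) show "0 < p k" "0 < q k" by (auto simp: inS_def intro: le_less_trans)
qed (use assms(1) in simp)

lemma inS_max_strict:
  assumes "inS K \<zeta> q" "kstar \<in> {1..K}" "\<forall>k\<in>{1..K}. q k \<le> q kstar"
  shows "\<forall>k\<in>{1..K}. k \<noteq> kstar \<longrightarrow> q k < q kstar"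
  using assms by (force simp: inS_def order_le_neq_trans)

theorem mainTheorem3:
  fixes K m kstar :: nat and \<zeta> \<delta> :: real and p q :: "nat \<Rightarrow> real"
  assumes "K \<ge> 2" and "0 < \<zeta>" and "\<zeta> < 1 / real K"
    and "inS K \<zeta> p" and "inS K \<zeta> q"
    and "kstar \<in> {1..K}" and "\<forall>k\<in>{1..K}. q k \<le> q kstar"
    and "m \<ge> 1"
    and "0 \<le> \<delta>" and "\<delta> < ln (1 / p kstar)"
  shows "is_pmf_on (seqs K m) (prod_dist m (phi K q p \<delta>))
    \<and> kl_div (seqs K m) (prod_dist m (phi K q p \<delta>)) (prod_dist m p) \<le> real m * \<delta>
    \<and> (\<forall>\<Phi>. is_pmf_on (seqs K m) \<Phi> \<and> kl_div (seqs K m) \<Phi> (prod_dist m p) \<le> real m * \<delta>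
          \<longrightarrow> cross_ent (seqs K m) (prod_dist m (phi K q p \<delta>)) (prod_dist m q)
              \<le> cross_ent (seqs K m) \<Phi> (prod_dist m q))
    \<and> (\<forall>\<Phi>. is_pmf_on (seqs K m) \<Phi> \<and> kl_div (seqs K m) \<Phi> (prod_dist m p) \<le> real m * \<delta>
          \<and> cross_ent (seqs K m) \<Phi> (prod_dist m q)
            = cross_ent (seqs K m) (prod_dist m (phi K q p \<delta>)) (prod_dist m q)
          \<longrightarrow> (\<forall>y\<in>seqs K m. \<Phi> y = prod_dist m (phi K q p \<delta>) y))"
proof -
  interpret tilting K p q
    using assms(1,2,4,5) by (intro tilting_if_inS) auto
  have q_max: "\<forall>k\<in>{1..K}. k \<noteq> kstar \<longrightarrow> q k < q kstar"
    using assms(5-7) by (rule inS_max_strict)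
  define \<alpha> where "\<alpha> = alpha_of K q p \<delta>"
  have \<alpha>: "0 \<le> \<alpha>" "kl_div {1..K} (tilt K q p \<alpha>) p = \<delta>"
    using alpha_of_spec[OF assms(1) _ assms(6) q_max assms(9,10)] assms(4)
    unfolding \<alpha>_def inS_def by auto
  define \<Psi> where "\<Psi> = prod_dist m (tilt K q p \<alpha>)"
  have \<Psi>_kl: "kl_div (seqs K m) \<Psi> (prod_dist m p) = real m * \<delta>"
    unfolding \<Psi>_def kl_div_prod_dist_tilt \<alpha>(2) ..
  note \<Psi>_optimal =
    prod_dist_tilt_minimizes_cross_ent[where m = m, OF \<alpha>(1), folded \<Psi>_def, unfolded \<Psi>_kl]
  have "prod_dist m (phi K q p \<delta>) = \<Psi>" unfolding phi_def \<alpha>_def \<Psi>_def ..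
  then show ?thesis
  proof (simp only:, intro conjI allI impI)
    show "is_pmf_on (seqs K m) \<Psi>"
      unfolding \<Psi>_def by (rule is_pmf_on_prod_dist[OF is_pmf_on_tilt])
    show "kl_div (seqs K m) \<Psi> (prod_dist m p) \<le> real m * \<delta>" using \<Psi>_kl by simp
  next
    fix \<Phi> assume "is_pmf_on (seqs K m) \<Phi> \<and> kl_div (seqs K m) \<Phi> (prod_dist m p) \<le> real m * \<delta>"
    then show "cross_ent (seqs K m) \<Psi> (prod_dist m q) \<le> cross_ent (seqs K m) \<Phi> (prod_dist m q)"
      using \<Psi>_optimal(1) by blast
  next
    fix \<Phi> assume "is_pmf_on (seqs K m) \<Phi> \<and> kl_div (seqs K m) \<Phi> (prod_dist m p) \<le> real m * \<delta>
      \<and> cross_ent (seqs K m) \<Phi> (prod_dist m q) = cross_ent (seqs K m) \<Psi> (prod_dist m q)"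
    then show "\<forall>y\<in>seqs K m. \<Phi> y = \<Psi> y" using \<Psi>_optimal(2) by simp
  qed
qed

end
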